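(* Let $P$ be a $C_\pi$ process and suppose $P\xrightarrow{\alpha_1}P_1\xrightarrow{\alpha_2}\cdots\xrightarrow{\alpha_m}P_m$. Then $\mathrm{fo}(P_m)\subseteq \mathrm{fo}(P)\cup\mathrm{bn}(\alpha_1)\cup\cdots\cup\mathrm{bn}(\alpha_m)$.
   Context: The Confidential $\pi$-calculus $C_\pi$. There are two disjoint countable sets: ${\cal V}$ of variables (ranged over by $x,y,z,\dots$) and ${\cal C}$ of channels (ranged over by $k,l,m,n,\dots$). Let ${\cal N}={\cal V}\cup{\cal C}$, ranged over by $a,b,c,\dots$. Prefixes: $\pi ::= \overline{a}\langle k\rangle \mid a(x) \mid [a=b]\pi$. Processes: $P ::= 0 \mid \pi.P \mid P\,|\,P \mid (\nu k)P \mid\, !P$. The object of an output is always a channel, and the bound object of an input is always a variable. In $(\nu k)P$ the channel $k$ is bound, and in $a(x).P$ the variable $x$ is bound, with scope $P$. The sets $\mathrm{fn}(P)$, $\mathrm{bn}(P)$ and $\mathrm{n}(P)$ are the free, bound and all names of $P$. The set $\mathrm{fo}(P)$ consists of the free channels of $P$ that occur as objects of output prefixes in $P$. Processes are identified up to $\alpha$-conversion. Actions: $\alpha ::= \overline{k}\langle l\rangle \mid k(l) \mid (\nu l)\overline{k}\langle l\rangle \mid \tau$, where $k,l$ are channels. We have $\mathrm{fn}(\overline{k}\langle l\rangle)=\mathrm{fn}(k(l))=\{k,l\}$, $\mathrm{fn}((\nu l)\overline{k}\langle l\rangle)=\{k\}$, $\mathrm{bn}((\nu l)\overline{k}\langle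 l\rangle)=\{l\}$, all other bound-name sets are empty, $\mathrm{fn}(\tau)=\emptyset$, and $\mathrm{n}(\alpha)=\mathrm{fn}(\alpha)\cup\mathrm{bn}(\alpha)$. The labelled transition relation $\xrightarrow{\alpha}$ is the least relation closed under the following rules: - (out) $\overline{k}\langle l\rangle.P \xrightarrow{\overline{k}\langle l\rangle} P$. - (in) $k(x).P \xrightarrow{k(l)} P\{l/x\}$ for every channel $l$. - (match) If $\pi.P\xrightarrow{\alpha}P'$, then $[a=a]\pi.P\xrightarrow{\alpha}P'$. - (res) If $P\xrightarrow{\alpha}P'$ and $k\notin \mathrm{n}(\alpha)$, then $(\nu k)P\xrightarrow{\alpha}(\nu k)P'$. - (open) If $P\xrightarrow{\overline{k}\langle l\rangle}Q$ and $k\neq l$, then $(\nu l)P\xrightarrow{(\nu l)\overline{k}\langle l\rangle}Q$. - (par-l) If $P\xrightarrow{\alpha}Q$ and $\mathrm{bn}(\alpha)\cap\mathrm{fn}(R)=\emptyset$, then $P|R\xrightarrow{\alpha}Q|R$. - (comm-l) If $P\xrightarrow{\overline{k}\langle l\rangle}P'$ and $Q\xrightarrow{k(l)}Q'$, then $P|Q\xrightarrow{\tau}P'|Q'$. - (close-l) If $P\xrightarrow{(\nu l)\overline{k}\langle l\rangle}P'$, $Q\xrightarrow{k(l)}Q'$ and $l\notin\mathrm{fn}(Q)$, then $P|Q\xrightarrow{\tau}(\nu l)(P'|Q')$. - The symmetric rules (par-r), (comm-r), (close-r). - (rep-act) If $P\xrightarrow{\alpha}P'$, then $!P\xrightarrow{\alpha}P'|!P$.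 - (rep-comm) If $P\xrightarrow{\overline{k}\langle l\rangle}P'$ and $P\xrightarrow{k(l)}P''$, then $!P\xrightarrow{\tau}(P'|P'')|!P$. - (rep-close) If $P\xrightarrow{(\nu l)\overline{k}\langle l\rangle}P'$, $P\xrightarrow{k(l)}P''$ and $l\notin\mathrm{fn}(P)$, then $!P\xrightarrow{\tau}(\nu l)(P'|P'')|!P$. *)

theory Defs
  imports Main
begin

type_synonym var = nat
type_synonym chan = nat

datatype name = Var var | Ch chan

datatype prefix = Out name chan | In name var | Match name name prefix

datatype proc = Nil | Pre prefix proc | Par proc proc | Res chan proc | Bang proc

text \<open>Actions: free output, input, bound output (Bout k l stands for (nu l) k<l>), tau.\<close>
datatype act = OutA chan chan | InA chan chan | BOut chan chan | Tau

fun bvar :: "prefix \<Rightarrow> var option" where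
  "bvar (Out a k) = None"
| "bvar (In a x) = Some x"
| "bvar (Match a b p) = bvar p"

fun fnpre :: "prefix \<Rightarrow> name set" where
  "fnpre (Out a k) = {a, Ch k}"
| "fnpre (In a x) = {a}"
| "fnpre (Match a b p) = {a, b} \<union> fnpre p"

fun fn :: "proc \<Rightarrow> name set" where
  "fn Nil = {}"
| "fn (Pre p P) = fnpre p \<union> (fn P - (case bvar p of None \<Rightarrow> {} | Some x \<Rightarrow> {Var x}))"
| "fn (Par P Q) = fn P \<union> fn Q"
| "fn (Res k P) = fn P - {Ch k}"
| "fn (Bang P) = fn P"

fun objpre :: "prefix \<Rightarrow> chan set" where
  "objpre (Out a k) = {k}"
| "objpre (In a x) = {}"
| "objpre (Match a b p) = objpre p"

fun fo :: "proc \<Rightarrow> chan set" where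
  "fo Nil = {}"
| "fo (Pre p P) = objpre p \<union> fo P"
| "fo (Par P Q) = fo P \<union> fo Q"
| "fo (Res k P) = fo P - {k}"
| "fo (Bang P) = fo P"

fun bchans :: "proc \<Rightarrow> chan set" where
  "bchans Nil = {}"
| "bchans (Pre p P) = bchans P"
| "bchans (Par P Q) = bchans P \<union> bchans Q"
| "bchans (Res k P) = insert k (bchans P)"
| "bchans (Bang P) = bchans P"

fun fnact :: "act \<Rightarrow> chan set" where
  "fnact (OutA k l) = {k, l}"
| "fnact (InA k l) = {k, l}"
| "fnact (BOut k l) = {k}"
| "fnact Tau = {}"

fun bnact :: "act \<Rightarrow> chan set" where
  "bnact (BOut k l) = {l}"
| "bnact _ = {}"

definition nact :: "act \<Rightarrow> chan set" where
  "nact a = fnact a \<union> bnact a"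

text \<open>Substitution of channel l for variable x (naive; capture of l by a restriction
is excluded by a side condition of the input rule, alpha-conversion supplies the rest).\<close>
definition substn :: "name \<Rightarrow> chan \<Rightarrow> var \<Rightarrow> name" where
  "substn a l x = (if a = Var x then Ch l else a)"

fun substpre :: "prefix \<Rightarrow> chan \<Rightarrow> var \<Rightarrow> prefix" where
  "substpre (Out a k) l x = Out (substn a l x) k"
| "substpre (In a y) l x = In (substn a l x) y"
| "substpre (Match a b p) l x = Match (substn a l x) (substn b l x) (substpre p l x)"

fun subst :: "proc \<Rightarrow> chan \<Rightarrow> var \<Rightarrow> proc" where
  "subst Nil l x = Nil"
| "subst (Pre p P) l x = Pre (substpre p l x) (if bvar p = Some x then P else subst P l x)"
| "subst (Par P Q) l x = Par (subst P l x) (subst Q l x)"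
| "subst (Res k P) l x = Res k (subst P l x)"
| "subst (Bang P) l x = Bang (subst P l x)"

definition sw :: "nat \<Rightarrow> nat \<Rightarrow> nat \<Rightarrow> nat" where
  "sw a b c = (if c = a then b else if c = b then a else c)"

fun swcn :: "chan \<Rightarrow> chan \<Rightarrow> name \<Rightarrow> name" where
  "swcn k k' (Ch c) = Ch (sw k k' c)"
| "swcn k k' (Var y) = Var y"

fun swcpre :: "chan \<Rightarrow> chan \<Rightarrow> prefix \<Rightarrow> prefix" where
  "swcpre k k' (Out a c) = Out (swcn k k' a) (sw k k' c)"
| "swcpre k k' (In a y) = In (swcn k k' a) y"
| "swcpre k k' (Match a b p) = Match (swcn k k' a) (swcn k k' b) (swcpre k k' p)"

fun swc :: "chan \<Rightarrow> chan \<Rightarrow> proc \<Rightarrow> proc" where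
  "swc k k' Nil = Nil"
| "swc k k' (Pre p P) = Pre (swcpre k k' p) (swc k k' P)"
| "swc k k' (Par P Q) = Par (swc k k' P) (swc k k' Q)"
| "swc k k' (Res c P) = Res (sw k k' c) (swc k k' P)"
| "swc k k' (Bang P) = Bang (swc k k' P)"

fun swvn :: "var \<Rightarrow> var \<Rightarrow> name \<Rightarrow> name" where
  "swvn x x' (Var y) = Var (sw x x' y)"
| "swvn x x' (Ch c) = Ch c"

fun swvpre :: "var \<Rightarrow> var \<Rightarrow> prefix \<Rightarrow> prefix" where
  "swvpre x x' (Out a c) = Out (swvn x x' a) c"
| "swvpre x x' (In a y) = In (swvn x x' a) (sw x x' y)"
| "swvpre x x' (Match a b p) = Match (swvn x x' a) (swvn x x' b) (swvpre x x' p)"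

fun swv :: "var \<Rightarrow> var \<Rightarrow> proc \<Rightarrow> proc" where
  "swv x x' Nil = Nil"
| "swv x x' (Pre p P) = Pre (swvpre x x' p) (swv x x' P)"
| "swv x x' (Par P Q) = Par (swv x x' P) (swv x x' Q)"
| "swv x x' (Res c P) = Res c (swv x x' P)"
| "swv x x' (Bang P) = Bang (swv x x' P)"

fun setbinder :: "prefix \<Rightarrow> var \<Rightarrow> prefix" where
  "setbinder (Out a c) y' = Out a c"
| "setbinder (In a y) y' = In a y'"
| "setbinder (Match a b p) y' = Match a b (setbinder p y')"

inductive alpha :: "proc \<Rightarrow> proc \<Rightarrow> bool" where
  a_refl: "alpha P P"
| a_sym: "alpha P Q \<Longrightarrow> alpha Q P"
| a_trans: "alpha P Q \<Longrightarrow> alpha Q R \<Longrightarrow> alpha P R"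
| a_pre: "alpha P Q \<Longrightarrow> alpha (Pre p P) (Pre p Q)"
| a_par: "alpha P P' \<Longrightarrow> alpha Q Q' \<Longrightarrow> alpha (Par P Q) (Par P' Q')"
| a_res: "alpha P Q \<Longrightarrow> alpha (Res k P) (Res k Q)"
| a_bang: "alpha P Q \<Longrightarrow> alpha (Bang P) (Bang Q)"
| a_resren: "Ch k' \<notin> fn (Res k P) \<Longrightarrow> alpha (Res k P) (Res k' (swc k k' P))"
| a_inren: "bvar p = Some y \<Longrightarrow> Var y' \<notin> fn (Pre p P) \<Longrightarrow>
             alpha (Pre p P) (Pre (setbinder p y') (swv y y' P))"

inductive ltrans :: "proc \<Rightarrow> act \<Rightarrow> proc \<Rightarrow> bool" where
  t_out: "ltrans (Pre (Out (Ch k) l) P) (OutA k l) P"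
| t_in: "l \<notin> bchans P \<Longrightarrow> ltrans (Pre (In (Ch k) x) P) (InA k l) (subst P l x)"
| t_match: "ltrans (Pre p P) \<alpha> P' \<Longrightarrow> ltrans (Pre (Match a a p) P) \<alpha> P'"
| t_res: "ltrans P \<alpha> P' \<Longrightarrow> k \<notin> nact \<alpha> \<Longrightarrow> ltrans (Res k P) \<alpha> (Res k P')"
| t_open: "ltrans P (OutA k l) Q \<Longrightarrow> k \<noteq> l \<Longrightarrow> ltrans (Res l P) (BOut k l) Q"
| t_parl: "ltrans P \<alpha> Q \<Longrightarrow> Ch ` bnact \<alpha> \<inter> fn R = {} \<Longrightarrow> ltrans (Par P R) \<alpha> (Par Q R)"
| t_parr: "ltrans P \<alpha> Q \<Longrightarrow> Ch ` bnact \<alpha> \<inter> fn R = {} \<Longrightarrow> ltrans (Par R P) \<alpha> (Par R Q)"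
| t_comml: "ltrans P (OutA k l) P' \<Longrightarrow> ltrans Q (InA k l) Q' \<Longrightarrow> ltrans (Par P Q) Tau (Par P' Q')"
| t_commr: "ltrans P (InA k l) P' \<Longrightarrow> ltrans Q (OutA k l) Q' \<Longrightarrow> ltrans (Par P Q) Tau (Par P' Q')"
| t_closel: "ltrans P (BOut k l) P' \<Longrightarrow> ltrans Q (InA k l) Q' \<Longrightarrow> Ch l \<notin> fn Q \<Longrightarrow>
             ltrans (Par P Q) Tau (Res l (Par P' Q'))"
| t_closer: "ltrans P (InA k l) P' \<Longrightarrow> ltrans Q (BOut k l) Q' \<Longrightarrow> Ch l \<notin> fn P \<Longrightarrow>
             ltrans (Par P Q) Tau (Res l (Par P' Q'))"
| t_repact: "ltrans P \<alpha> P' \<Longrightarrow> ltrans (Bang P) \<alpha> (Par P' (Bang P))"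
| t_repcomm: "ltrans P (OutA k l) P' \<Longrightarrow> ltrans P (InA k l) P'' \<Longrightarrow>
              ltrans (Bang P) Tau (Par (Par P' P'') (Bang P))"
| t_repclose: "ltrans P (BOut k l) P' \<Longrightarrow> ltrans P (InA k l) P'' \<Longrightarrow> Ch l \<notin> fn P \<Longrightarrow>
               ltrans (Bang P) Tau (Par (Res l (Par P' P'')) (Bang P))"
| t_alpha: "alpha P P0 \<Longrightarrow> ltrans P0 \<alpha> Q0 \<Longrightarrow> alpha Q0 Q \<Longrightarrow> ltrans P \<alpha> Q"

end

theory Submission
  imports Defs
begin

text \<open>Output objects are always channels, so substituting a channel for a variable never
changes the output objects; alpha-conversion only renames binders that are not free, so it
preserves \<open>fo\<close> as well. The only transition rule that removes a restriction binding an
output object is (open), and the channel it frees is exactly the bound name of the action.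
Hence a single transition \<open>P \<rightarrow>\<^sup>\<alpha> Q\<close> satisfies \<open>fo Q \<subseteq> fo P \<union> bn \<alpha>\<close>, and the
statement follows by chaining along the computation.\<close>

lemma objpre_substpre [simp]: "objpre (substpre p l x) = objpre p"
  by (induction p) auto

lemma fo_subst [simp]: "fo (subst P l x) = fo P"
  by (induction P) auto

lemma objpre_swvpre [simp]: "objpre (swvpre x y p) = objpre p"
  by (induction p) auto

lemma fo_swv [simp]: "fo (swv x y P) = fo P"
  by (induction P) auto

lemma objpre_setbinder [simp]: "objpre (setbinder p y) = objpre p"
  by (induction p) auto

lemma inj_sw: "inj (sw a b)"
  unfolding inj_def sw_def by auto

lemma objpre_swcpre [simp]: "objpre (swcpre k k' p) = sw k k' ` objpre p"
  by (induction p) auto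

lemma fo_swc: "fo (swc k k' P) = sw k k' ` fo P"
proof (induction P)
  case (Res c P)
  then show ?case using inj_sw[of k k'] by (simp add: image_set_diff)
qed (auto simp: image_Un)

lemma objpre_in_fnpre: "k \<in> objpre p \<Longrightarrow> Ch k \<in> fnpre p"
  by (induction p) auto

lemma fo_subset_fn: "Ch ` fo P \<subseteq> fn P"
  by (induction P) (auto split: option.splits dest: objpre_in_fnpre)

lemma alpha_fo_eq: "alpha P Q \<Longrightarrow> fo P = fo Q"
proof (induction rule: alpha.induct)
  case (a_resren k' k P)
  then have "k' \<notin> fo P - {k}" using fo_subset_fn[of P] by auto
  then show ?case by (auto simp: fo_swc sw_def)
qed auto

lemma ltrans_fo_subset: "ltrans P \<alpha> Q \<Longrightarrow> fo Q \<subseteq> fo P \<union> bnact \<alpha>"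
proof (induction rule: ltrans.induct)
  case (t_alpha P P0 \<alpha> Q0 Q)
  then show ?case using alpha_fo_eq[OF t_alpha(1)] alpha_fo_eq[OF t_alpha(3)] by simp
qed auto

lemma chain_subset_UN:
  fixes X B :: "nat \<Rightarrow> 'a set"
  assumes "\<And>i. i < m \<Longrightarrow> X (Suc i) \<subseteq> X i \<union> B (Suc i)"
  shows "X m \<subseteq> X 0 \<union> (\<Union>i\<in>{1..m}. B i)"
  using assms
proof (induction m)
  case (Suc m)
  then have "X m \<subseteq> X 0 \<union> (\<Union>i\<in>{1..m}. B i)" by simp
  moreover have "X (Suc m) \<subseteq> X m \<union> B (Suc m)" using Suc.prems by simp
  ultimately show ?case by fastforce
qed simp

theorem corollary2:
  fixes Ps :: "nat \<Rightarrow> proc" and as :: "nat \<Rightarrow> act" and m :: nat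
  assumes "\<forall>i<m. ltrans (Ps i) (as (Suc i)) (Ps (Suc i))"
  shows "fo (Ps m) \<subseteq> fo (Ps 0) \<union> (\<Union>i\<in>{1..m}. bnact (as i))"
  using assms by (intro chain_subset_UN) (simp add: ltrans_fo_subset)

end
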